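(* Let $\mathbb F\in\{\mathbb Q,\mathbb R,\mathbb C\}$. The $\mathsf p$-family $(\mathrm{HC}^2)=(\mathrm{HC}_n^2)_{n\in\mathbb N}$ lies in $\mathrm{VNPC}(\le_{\mathsf c})$, i.e. $(\mathrm{HC}^2)\in\mathrm{VNP}$ and $(\mathrm{HC})\le_{\mathsf c}(\mathrm{HC}^2)$.
   Context: A $\mathsf p$-family $(f)=(f_n)_{n\in\mathbb N}$ is a sequence of multivariate polynomials over $\mathbb F$ whose number of variables and degree are polynomially bounded in $n$. $f\le g$ (projection) means $f=g(\alpha_1,\dots,\alpha_M)$ with each $\alpha_i$ a variable of $f$ or a field constant; $(f)\le_{\mathsf p}(g)$ if $f_n\le g_{t(n)}$ for all $n$ for some polynomially bounded $t$. The oracle complexity $L^g(f)$ is the minimum size of an algebraic circuit with $+$, $\times$ and $g$-oracle gates (outputting $g$ evaluated at its inputs) computing $f$; $(f)\le_{\mathsf c}(g)$ if $L^{g_{t(n)}}(f_n)$ is polynomially bounded for some polynomially bounded $t$. $\mathrm{HC}_n=\sum_{\pi}\prod_{i=1}^n x_{i,\pi(i)}$, summing over permutations $\pi$ of $\{1,\dots,n\}$ that are $n$-cycles. $\mathrm{VNP}$ is the set of $\mathsf p$-families $(f)$ with $(f)\le_{\mathsf p}(\mathrm{HC})$, and $\mathrm{VNPC}(\le_{\mathsf c})=\{(f)\in\mathrm{VNP}:(\mathrm{HC})\le_{\mathsf c}(f)\}$. *)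

theory Defs
  imports Complex_Main "HOL-Combinatorics.Permutations"
begin

text \<open>Polynomials over an infinite field (Q, R, C) are represented by the polynomial
functions they induce; variables are indexed by nat.\<close>

type_synonym 'a pfun = "(nat \<Rightarrow> 'a) \<Rightarrow> 'a"

datatype 'a pexpr = PVar nat | PConst 'a | PAdd "'a pexpr" "'a pexpr" | PMul "'a pexpr" "'a pexpr"

fun peval :: "'a::comm_ring_1 pexpr \<Rightarrow> (nat \<Rightarrow> 'a) \<Rightarrow> 'a" where
  "peval (PVar i) x = x i"
| "peval (PConst c) x = c"
| "peval (PAdd p q) x = peval p x + peval q x"
| "peval (PMul p q) x = peval p x * peval q x"

fun pdeg :: "'a pexpr \<Rightarrow> nat" where
  "pdeg (PVar i) = 1"
| "pdeg (PConst c) = 0"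
| "pdeg (PAdd p q) = max (pdeg p) (pdeg q)"
| "pdeg (PMul p q) = pdeg p + pdeg q"

fun pvars :: "'a pexpr \<Rightarrow> nat set" where
  "pvars (PVar i) = {i}"
| "pvars (PConst c) = {}"
| "pvars (PAdd p q) = pvars p \<union> pvars q"
| "pvars (PMul p q) = pvars p \<union> pvars q"

definition is_poly :: "nat \<Rightarrow> nat \<Rightarrow> 'a::comm_ring_1 pfun \<Rightarrow> bool" where
  "is_poly N d f \<longleftrightarrow> (\<exists>e. pvars e \<subseteq> {..<N} \<and> pdeg e \<le> d \<and> (\<forall>x. peval e x = f x))"

definition poly_bounded :: "(nat \<Rightarrow> nat) \<Rightarrow> bool" where
  "poly_bounded t \<longleftrightarrow> (\<exists>c. \<forall>n. t n \<le> (n + 1) ^ c)"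

definition p_family :: "(nat \<Rightarrow> 'a::comm_ring_1 pfun) \<Rightarrow> bool" where
  "p_family f \<longleftrightarrow> (\<exists>N d. poly_bounded N \<and> poly_bounded d \<and> (\<forall>n. is_poly (N n) (d n) (f n)))"

definition proj_le :: "'a pfun \<Rightarrow> 'a pfun \<Rightarrow> bool" where
  "proj_le f g \<longleftrightarrow> (\<exists>\<sigma> :: nat \<Rightarrow> nat + 'a.
      \<forall>x. f x = g (\<lambda>i. case \<sigma> i of Inl j \<Rightarrow> x j | Inr c \<Rightarrow> c))"

definition p_reduces :: "(nat \<Rightarrow> 'a pfun) \<Rightarrow> (nat \<Rightarrow> 'a pfun) \<Rightarrow> bool" where
  "p_reduces f g \<longleftrightarrow> (\<exists>t. poly_bounded t \<and> (\<forall>n. proj_le (f n) (g (t n))))"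

definition is_ncycle :: "nat \<Rightarrow> (nat \<Rightarrow> nat) \<Rightarrow> bool" where
  "is_ncycle n \<pi> \<longleftrightarrow> (\<forall>i<n. \<forall>j<n. \<exists>k. (\<pi> ^^ k) i = j)"

text \<open>Variable x_{i,j} (0-based i,j < n) is x (i*n + j).\<close>
definition HC :: "nat \<Rightarrow> 'a::comm_ring_1 pfun" where
  "HC n x = (\<Sum>\<pi>\<in>{\<pi>. \<pi> permutes {..<n} \<and> is_ncycle n \<pi>}. \<Prod>i<n. x (i * n + \<pi> i))"

definition HCsq :: "nat \<Rightarrow> 'a::comm_ring_1 pfun" where
  "HCsq n x = (HC n x) ^ 2"

definition VNP :: "(nat \<Rightarrow> 'a::comm_ring_1 pfun) set" where
  "VNP = {f. p_family f \<and> p_reduces f HC}"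

text \<open>Oracle circuits as straight-line programs; gate k may only refer to gates < k.
  An oracle gate feeds its listed gates to the oracle's variables 0,1,...
  (remaining variables get 0). The output is the last gate; size = number of gates.\<close>
datatype 'a gate = GVar nat | GConst 'a | GAdd nat nat | GMul nat nat | GOracle "nat list"

fun gate_refs :: "'a gate \<Rightarrow> nat set" where
  "gate_refs (GVar j) = {}"
| "gate_refs (GConst c) = {}"
| "gate_refs (GAdd i j) = {i, j}"
| "gate_refs (GMul i j) = {i, j}"
| "gate_refs (GOracle as) = set as"

fun gate_val :: "'a::comm_ring_1 pfun \<Rightarrow> (nat \<Rightarrow> 'a) \<Rightarrow> 'a list \<Rightarrow> 'a gate \<Rightarrow> 'a" where
  "gate_val g x vs (GVar j) = x j"
| "gate_val g x vs (GConst c) = c"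
| "gate_val g x vs (GAdd i j) = vs ! i + vs ! j"
| "gate_val g x vs (GMul i j) = vs ! i * vs ! j"
| "gate_val g x vs (GOracle as) = g (\<lambda>k. if k < length as then vs ! (as ! k) else 0)"

definition prog_vals :: "'a::comm_ring_1 pfun \<Rightarrow> (nat \<Rightarrow> 'a) \<Rightarrow> 'a gate list \<Rightarrow> 'a list" where
  "prog_vals g x prog = foldl (\<lambda>vs gt. vs @ [gate_val g x vs gt]) [] prog"

definition wf_prog :: "'a gate list \<Rightarrow> bool" where
  "wf_prog prog \<longleftrightarrow> (\<forall>k<length prog. gate_refs (prog ! k) \<subseteq> {..<k})"

definition oracle_cost_le :: "'a::comm_ring_1 pfun \<Rightarrow> 'a pfun \<Rightarrow> nat \<Rightarrow> bool" where
  "oracle_cost_le g f s \<longleftrightarrow> (\<exists>prog. prog \<noteq> [] \<and> wf_prog prog \<and> length prog \<le> s \<and>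
      (\<forall>x. last (prog_vals g x prog) = f x))"

definition c_reduces :: "(nat \<Rightarrow> 'a::comm_ring_1 pfun) \<Rightarrow> (nat \<Rightarrow> 'a pfun) \<Rightarrow> bool" where
  "c_reduces f g \<longleftrightarrow> (\<exists>t q. poly_bounded t \<and> poly_bounded q \<and>
      (\<forall>n. oracle_cost_le (g (t n)) (f n) (q n)))"

definition VNPC_c :: "(nat \<Rightarrow> 'a::comm_ring_1 pfun) set" where
  "VNPC_c = {f \<in> VNP. c_reduces HC f}"

end

(* HC_n^2 is a projection of HC_{2n}: put one copy of the n vertices on {0..<n} and another on
   {n..<2n}, and substitute x for both diagonal blocks after swapping the columns 0 and n, and 0
   elsewhere.  A 2n-cycle survives the substitution only if, after swapping 0 and n, it maps each
   half to itself, and a permutation f of this form makes transpose 0 n o f a single cycle exactly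
   when both halves of f are single cycles.  So the surviving 2n-cycles are in bijection with pairs
   of n-cycles, with weight the product of their weights.

   Conversely, let u be the adjacency matrix of a fixed n-cycle and P(t) = HC_n(t x + u).  P is a
   polynomial in t of degree at most n with P(0) = HC_n(u) = 1 and t^n-coefficient HC_n(x).
   Evaluating P(t)^2 at t = 0, ..., 2n with the oracle and interpolating yields the coefficients of
   P^2; since P(0) = 1 the coefficients c_k of P then follow from
   c_k = (coeff (P^2) k - sum_{0<i<k} c_i c_{k-i}) / 2.  The resulting circuit has O(n^3) gates. *)

theory Submission
  imports Defs "HOL-Computational_Algebra.Polynomial"
begin

section \<open>Single cycles and splicing\<close>

definition cycle_on :: "('a \<Rightarrow> 'a) \<Rightarrow> 'a set \<Rightarrow> bool" where
  "cycle_on f S \<longleftrightarrow> (\<forall>i\<in>S. \<forall>j\<in>S. \<exists>k. (f ^^ k) i = j)"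

lemma is_ncycle_iff_cycle_on: "is_ncycle n \<pi> \<longleftrightarrow> cycle_on \<pi> {..<n}"
  by (auto simp: is_ncycle_def cycle_on_def)

lemma funpow_in_invariant:
  assumes "f ` S \<subseteq> S" "x \<in> S"
  shows "(f ^^ k) x \<in> S"
  using assms by (induction k) auto

lemma cycle_on_iff_invariant_subsets:
  assumes "f ` S \<subseteq> S"
  shows "cycle_on f S \<longleftrightarrow> (\<forall>T\<subseteq>S. T \<noteq> {} \<longrightarrow> f ` T \<subseteq> T \<longrightarrow> T = S)"
proof
  assume cyc: "cycle_on f S"
  show "\<forall>T\<subseteq>S. T \<noteq> {} \<longrightarrow> f ` T \<subseteq> T \<longrightarrow> T = S"
  proof (intro allI impI)
    fix T assume T: "T \<subseteq> S" "T \<noteq> {}" "f ` T \<subseteq> T"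
    obtain i where "i \<in> T" using T by blast
    have "j \<in> T" if "j \<in> S" for j
    proof -
      obtain k where "(f ^^ k) i = j" using cyc T \<open>i \<in> T\<close> \<open>j \<in> S\<close> unfolding cycle_on_def by blast
      with funpow_in_invariant[OF \<open>f ` T \<subseteq> T\<close> \<open>i \<in> T\<close>, of k] show ?thesis by simp
    qed
    with T(1) show "T = S" by blast
  qed
next
  assume inv: "\<forall>T\<subseteq>S. T \<noteq> {} \<longrightarrow> f ` T \<subseteq> T \<longrightarrow> T = S"
  show "cycle_on f S" unfolding cycle_on_def
  proof (intro ballI)
    fix i j assume "i \<in> S" "j \<in> S"
    define orb where "orb = range (\<lambda>k. (f ^^ k) i)"
    have "f ` orb \<subseteq> orb"
      by (auto simp: orb_def simp flip: funpow.simps(2) comp_apply[of f "f ^^ _"])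
    moreover have "orb \<subseteq> S" "orb \<noteq> {}"
      using funpow_in_invariant[OF assms \<open>i \<in> S\<close>] by (auto simp: orb_def)
    ultimately have "orb = S" using inv by blast
    with \<open>j \<in> S\<close> show "\<exists>k. (f ^^ k) i = j" by (auto simp: orb_def)
  qed
qed

lemma cycle_on_conj:
  assumes "f ` S \<subseteq> S" "bij_betw h S S'" "\<And>x. x \<in> S \<Longrightarrow> g (h x) = h (f x)"
  shows "cycle_on g S' \<longleftrightarrow> cycle_on f S"
proof -
  have pow: "(g ^^ k) (h x) = h ((f ^^ k) x)" if "x \<in> S" for k x
    by (induction k) (use assms(3) funpow_in_invariant[OF assms(1) that] in auto)
  have "cycle_on g S' \<longleftrightarrow> (\<forall>i\<in>S. \<forall>j\<in>S. \<exists>k. (g ^^ k) (h i) = h j)"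
    using bij_betw_imp_surj_on[OF assms(2)] by (auto simp: cycle_on_def)
  also have "\<dots> \<longleftrightarrow> cycle_on f S"
    using bij_betw_imp_inj_on[OF assms(2)] funpow_in_invariant[OF assms(1)]
    by (auto simp: cycle_on_def pow inj_on_eq_iff)
  finally show ?thesis .
qed

locale splice =
  fixes f :: "'a \<Rightarrow> 'a" and A B :: "'a set" and a b :: 'a
  assumes perm: "f permutes A \<union> B" and disjoint: "A \<inter> B = {}"
    and closed_A: "f ` A \<subseteq> A" and closed_B: "f ` B \<subseteq> B"
    and a_in: "a \<in> A" and b_in: "b \<in> B"
begin

abbreviation \<sigma> where "\<sigma> \<equiv> transpose a b \<circ> f"

lemma splice_swapped: "splice f B A b a"
  using perm disjoint closed_A closed_B a_in b_in
  by unfold_locales (simp_all add: Un_commute Int_commute)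

lemma \<sigma>_swapped: "transpose b a \<circ> f = \<sigma>"
  by (simp add: transpose_commute)

lemma \<sigma>_closed: "\<sigma> ` (A \<union> B) \<subseteq> A \<union> B"
  using closed_A closed_B a_in b_in by (auto simp: transpose_def)

lemma preimage_a: obtains a' where "a' \<in> A" "f a' = a"
proof -
  obtain y where y: "f y = a" using permutes_surj[OF perm] by (metis surjD)
  have "y \<in> A"
  proof (rule ccontr)
    assume "y \<notin> A"
    then consider "y \<in> B" | "y \<notin> A \<union> B" by blast
    then show False
      using y closed_B disjoint a_in permutes_not_in[OF perm, of y] by cases auto
  qed
  with y show thesis using that by blast
qed

lemma \<sigma>_eq_f:
  assumes "x \<in> A" "f x \<noteq> a"
  shows "\<sigma> x = f x"
  using assms closed_A disjoint b_in by (auto simp: transpose_def)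

lemma \<sigma>_invariant_set:
  assumes cyc: "cycle_on f A" and T: "\<sigma> ` T \<subseteq> T"
  shows "T \<inter> A \<noteq> {} \<Longrightarrow> b \<in> T" and "a \<in> T \<Longrightarrow> A \<subseteq> T"
proof -
  obtain a' where a': "a' \<in> A" "f a' = a" by (rule preimage_a)
  \<comment> \<open>On \<open>A\<close>, \<open>\<sigma>\<close> agrees with \<open>f\<close> except at \<open>a'\<close>, which it sends to \<open>b\<close>.\<close>
  have \<sigma>a': "\<sigma> a' = b" using a' by simp
  have fill: "A \<subseteq> T" if "T \<inter> A \<noteq> {}" "a' \<in> T \<Longrightarrow> a \<in> T"
  proof -
    have "f ` (T \<inter> A) \<subseteq> T \<inter> A"
    proof
      fix y assume "y \<in> f ` (T \<inter> A)"
      then obtain x where x: "x \<in> T \<inter> A" "y = f x" by blast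
      have "y \<in> A" using x closed_A by blast
      moreover have "y \<in> T"
      proof (cases "x = a'")
        case True then show ?thesis using x a' that(2) by simp
      next
        case False
        then have "f x \<noteq> a" using a' x permutes_inj_on[OF perm] by (auto dest: inj_onD)
        then show ?thesis using x T \<sigma>_eq_f by force
      qed
      ultimately show "y \<in> T \<inter> A" by blast
    qed
    then have "T \<inter> A = A"
      using cyc that(1) closed_A by (simp add: cycle_on_iff_invariant_subsets)
    then show ?thesis by blast
  qed
  show "b \<in> T" if "T \<inter> A \<noteq> {}"
  proof (cases "a' \<in> T")
    case True then show ?thesis using T \<sigma>a' by force
  next
    case False then show ?thesis using fill[OF that] a' by blast
  qed
  show "A \<subseteq> T" if "a \<in> T"
    using fill that a_in by blast
qed

lemma cycle_on_\<sigma>I: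
  assumes "cycle_on f A" "cycle_on f B"
  shows "cycle_on \<sigma> (A \<union> B)"
  unfolding cycle_on_iff_invariant_subsets[OF \<sigma>_closed]
proof (intro allI impI)
  fix T assume T: "T \<subseteq> A \<union> B" "T \<noteq> {}" "\<sigma> ` T \<subseteq> T"
  interpret BA: splice f B A b a by (rule splice_swapped)
  note left = \<sigma>_invariant_set[OF assms(1) T(3)]
  note right = BA.\<sigma>_invariant_set[OF assms(2) T(3)[folded \<sigma>_swapped]]
  have "a \<in> T \<and> b \<in> T"
    using T(1,2) left(1) right(1) a_in b_in by blast
  then show "T = A \<union> B" using T(1) left(2) right(2) by blast
qed

lemma cycle_on_A_if_cycle_on_\<sigma>:
  assumes cyc: "cycle_on \<sigma> (A \<union> B)"
  shows "cycle_on f A"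
  unfolding cycle_on_iff_invariant_subsets[OF closed_A]
proof (intro allI impI)
  fix T assume T: "T \<subseteq> A" "T \<noteq> {}" "f ` T \<subseteq> T"
  \<comment> \<open>\<open>\<sigma>\<close> leaves \<open>T\<close> only where \<open>f\<close> hits \<open>a\<close>, towards \<open>b\<close>, and returns from \<open>B\<close> only to \<open>a\<close>.\<close>
  define T' where "T' = T \<union> (if a \<in> T then B else {})"
  have "\<sigma> ` T' \<subseteq> T'"
  proof
    fix y assume "y \<in> \<sigma> ` T'"
    then obtain x where x: "x \<in> T'" "y = \<sigma> x" by blast
    then consider "x \<in> T" | "a \<in> T" "x \<in> B" by (auto simp: T'_def split: if_splits)
    then show "y \<in> T'"
    proof cases
      case 1
      then have "f x \<in> T" "f x \<in> A" using T by auto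
      then show ?thesis using x b_in disjoint by (auto simp: T'_def transpose_def)
    next
      case 2
      then have "f x \<in> B" using closed_B by blast
      then show ?thesis using x 2 a_in disjoint by (auto simp: T'_def transpose_def)
    qed
  qed
  moreover have "T' \<subseteq> A \<union> B" "T' \<noteq> {}" using T by (auto simp: T'_def)
  ultimately have "T' = A \<union> B"
    using cyc \<sigma>_closed by (simp add: cycle_on_iff_invariant_subsets)
  then show "T = A" using T(1) disjoint by (auto simp: T'_def split: if_splits)
qed

theorem cycle_on_splice_iff: "cycle_on \<sigma> (A \<union> B) \<longleftrightarrow> cycle_on f A \<and> cycle_on f B"
proof -
  interpret BA: splice f B A b a by (rule splice_swapped)
  show ?thesis
    using cycle_on_\<sigma>I cycle_on_A_if_cycle_on_\<sigma>
      BA.cycle_on_A_if_cycle_on_\<sigma>[unfolded \<sigma>_swapped Un_commute[of B A]]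
    by blast
qed

end

section \<open>\<open>HC\<^sup>2\<close> is a projection of \<open>HC\<close>\<close>

definition ncycles :: "nat \<Rightarrow> (nat \<Rightarrow> nat) set" where
  "ncycles n = {\<pi>. \<pi> permutes {..<n} \<and> is_ncycle n \<pi>}"

lemma HC_eq_sum_ncycles: "HC n x = (\<Sum>\<pi>\<in>ncycles n. \<Prod>i<n. x (i * n + \<pi> i))"
  by (simp add: HC_def ncycles_def)

lemma finite_ncycles: "finite (ncycles n)"
  by (rule finite_subset[OF _ finite_permutations[of "{..<n}"]]) (auto simp: ncycles_def)

lemma permutes_lessThan_less: "\<pi> permutes {..<n} \<Longrightarrow> i < n \<Longrightarrow> \<pi> i < n"
  using permutes_in_image by fastforce

lemma HC_index_less:
  assumes "\<pi> \<in> ncycles n" "i < n"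
  shows "i * n + \<pi> i < n * n"
proof -
  have "\<pi> i < n" using assms by (simp add: ncycles_def permutes_lessThan_less)
  then have "i * n + \<pi> i < Suc i * n" by simp
  also have "\<dots> \<le> n * n" using assms(2) by (intro mult_right_mono) auto
  finally show ?thesis .
qed

lemma HC_cong: "(\<And>k. k < n * n \<Longrightarrow> x k = y k) \<Longrightarrow> HC n x = HC n y"
  unfolding HC_eq_sum_ncycles by (intro sum.cong prod.cong refl) (auto simp: HC_index_less)

lemma HC_0 [simp]: "HC 0 x = 1"
proof -
  have "ncycles 0 = {id}" by (auto simp: ncycles_def is_ncycle_def)
  then show ?thesis by (simp add: HC_eq_sum_ncycles)
qed

definition join_perm :: "nat \<Rightarrow> (nat \<Rightarrow> nat) \<Rightarrow> (nat \<Rightarrow> nat) \<Rightarrow> nat \<Rightarrow> nat" where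
  "join_perm n \<pi>\<^sub>1 \<pi>\<^sub>2 x = (if x < n then \<pi>\<^sub>1 x else if x < 2 * n then n + \<pi>\<^sub>2 (x - n) else x)"

definition preserves_halves :: "nat \<Rightarrow> (nat \<Rightarrow> nat) \<Rightarrow> bool" where
  "preserves_halves n f \<longleftrightarrow> (\<forall>x<2 * n. x < n \<longleftrightarrow> f x < n)"

lemma join_perm_permutes:
  assumes \<pi>\<^sub>1: "\<pi>\<^sub>1 permutes {..<n}" and \<pi>\<^sub>2: "\<pi>\<^sub>2 permutes {..<n}"
  shows "join_perm n \<pi>\<^sub>1 \<pi>\<^sub>2 permutes {..<2 * n}"
proof (rule inj_imp_permutes)
  note less = permutes_lessThan_less[OF \<pi>\<^sub>1] permutes_lessThan_less[OF \<pi>\<^sub>2]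
  show "inj_on (join_perm n \<pi>\<^sub>1 \<pi>\<^sub>2) {..<2 * n}"
  proof (rule inj_onI)
    fix x y assume "x \<in> {..<2 * n}" "y \<in> {..<2 * n}" "join_perm n \<pi>\<^sub>1 \<pi>\<^sub>2 x = join_perm n \<pi>\<^sub>1 \<pi>\<^sub>2 y"
    then show "x = y"
      using less[of x] less[of y] less[of "x - n"] less[of "y - n"]
        permutes_inj[OF \<pi>\<^sub>1] permutes_inj[OF \<pi>\<^sub>2]
      by (auto simp: join_perm_def inj_eq split: if_splits)
  qed
  show "join_perm n \<pi>\<^sub>1 \<pi>\<^sub>2 x \<in> {..<2 * n}" if "x \<in> {..<2 * n}" for x
    using that less[of x] less[of "x - n"] by (auto simp: join_perm_def)
qed (auto simp: join_perm_def)

lemma preserves_halves_join_perm: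
  "\<pi>\<^sub>1 permutes {..<n} \<Longrightarrow> preserves_halves n (join_perm n \<pi>\<^sub>1 \<pi>\<^sub>2)"
  by (auto simp: preserves_halves_def join_perm_def permutes_lessThan_less)

lemma join_perm_inj:
  assumes "\<pi>\<^sub>1 permutes {..<n}" "\<pi>\<^sub>2 permutes {..<n}" "\<rho>\<^sub>1 permutes {..<n}" "\<rho>\<^sub>2 permutes {..<n}"
    and eq: "join_perm n \<pi>\<^sub>1 \<pi>\<^sub>2 = join_perm n \<rho>\<^sub>1 \<rho>\<^sub>2"
  shows "\<pi>\<^sub>1 = \<rho>\<^sub>1 \<and> \<pi>\<^sub>2 = \<rho>\<^sub>2"
proof (intro conjI ext)
  fix x
  show "\<pi>\<^sub>1 x = \<rho>\<^sub>1 x"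
    using fun_cong[OF eq, of x] permutes_not_in[OF assms(1)] permutes_not_in[OF assms(3)]
    by (cases "x < n") (auto simp: join_perm_def)
  show "\<pi>\<^sub>2 x = \<rho>\<^sub>2 x"
    using fun_cong[OF eq, of "n + x"] permutes_not_in[OF assms(2)] permutes_not_in[OF assms(4)]
    by (cases "x < n") (auto simp: join_perm_def)
qed

lemma preserves_halves_imp_join_perm:
  assumes f: "f permutes {..<2 * n}" and "preserves_halves n f"
  obtains \<pi>\<^sub>1 \<pi>\<^sub>2 where "\<pi>\<^sub>1 permutes {..<n}" "\<pi>\<^sub>2 permutes {..<n}" "f = join_perm n \<pi>\<^sub>1 \<pi>\<^sub>2"
proof
  have lo: "f x < n" if "x < n" for x
    using assms(2) that trans_less_add1[of x n n] unfolding preserves_halves_def mult_2 by blast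
  have hi: "n \<le> f x \<and> f x < 2 * n" if "n \<le> x" "x < 2 * n" for x
    using assms that permutes_lessThan_less[OF f] by (auto simp: preserves_halves_def)
  have inj: "inj_on f {..<2 * n}" using permutes_inj_on[OF f] .
  have inj_lo: "inj_on f {..<n}" using inj by (rule inj_on_subset) auto
  then have "f ` {..<n} = {..<n}" using lo by (intro endo_inj_surj) auto
  then show "restrict_id f {..<n} permutes {..<n}"
    using inj_lo by (intro permutes_restrict_id) (simp add: bij_betw_def)
  show "(\<lambda>x. if x < n then f (n + x) - n else x) permutes {..<n}"
  proof (rule inj_imp_permutes)
    show "inj_on (\<lambda>x. if x < n then f (n + x) - n else x) {..<n}"
    proof (rule inj_onI)
      fix x y assume "x \<in> {..<n}" "y \<in> {..<n}"
        and "(if x < n then f (n + x) - n else x) = (if y < n then f (n + y) - n else y)"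
      then have "f (n + x) = f (n + y)" "n + x < 2 * n" "n + y < 2 * n"
        using hi[of "n + x"] hi[of "n + y"] by auto
      then show "x = y" using inj_onD[OF inj] by fastforce
    qed
    show "(if x < n then f (n + x) - n else x) \<in> {..<n}" if "x \<in> {..<n}" for x
      using that hi[of "n + x"] by auto
  qed auto
  show "f = join_perm n (restrict_id f {..<n}) (\<lambda>x. if x < n then f (n + x) - n else x)"
    using hi permutes_not_in[OF f] by (auto simp: fun_eq_iff join_perm_def restrict_id_def)
qed

definition glue_perm :: "nat \<Rightarrow> (nat \<Rightarrow> nat) \<Rightarrow> (nat \<Rightarrow> nat) \<Rightarrow> nat \<Rightarrow> nat" where
  "glue_perm n \<pi>\<^sub>1 \<pi>\<^sub>2 = transpose 0 n \<circ> join_perm n \<pi>\<^sub>1 \<pi>\<^sub>2"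

lemma is_ncycle_glue_perm_iff:
  assumes "0 < n" "\<pi>\<^sub>1 permutes {..<n}" "\<pi>\<^sub>2 permutes {..<n}"
  shows "is_ncycle (2 * n) (glue_perm n \<pi>\<^sub>1 \<pi>\<^sub>2) \<longleftrightarrow> is_ncycle n \<pi>\<^sub>1 \<and> is_ncycle n \<pi>\<^sub>2"
proof -
  let ?f = "join_perm n \<pi>\<^sub>1 \<pi>\<^sub>2"
  have halves: "{..<2 * n} = {..<n} \<union> {n..<2 * n}" by auto
  have img: "\<pi>\<^sub>1 ` {..<n} \<subseteq> {..<n}" "\<pi>\<^sub>2 ` {..<n} \<subseteq> {..<n}"
    using assms permutes_lessThan_less by auto
  interpret splice ?f "{..<n}" "{n..<2 * n}" 0 n
    using assms img join_perm_permutes[OF assms(2,3)] permutes_lessThan_less[OF assms(3)]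
    by unfold_locales (auto simp: halves join_perm_def)
  have "cycle_on ?f {..<n} \<longleftrightarrow> cycle_on \<pi>\<^sub>1 {..<n}"
    by (rule cycle_on_conj[where h = id]) (use img in \<open>auto simp: join_perm_def\<close>)
  moreover have "cycle_on ?f {n..<2 * n} \<longleftrightarrow> cycle_on \<pi>\<^sub>2 {..<n}"
    by (rule cycle_on_conj[where h = "(+) n"])
      (use img in \<open>auto simp: join_perm_def atLeast0LessThan[symmetric]\<close>)
  ultimately show ?thesis
    using cycle_on_splice_iff by (simp add: is_ncycle_iff_cycle_on glue_perm_def halves)
qed

lemma ncycles_preserving_halves:
  assumes "0 < n"
  shows "{\<sigma> \<in> ncycles (2 * n). preserves_halves n (transpose 0 n \<circ> \<sigma>)}
    = (\<lambda>(\<pi>\<^sub>1, \<pi>\<^sub>2). glue_perm n \<pi>\<^sub>1 \<pi>\<^sub>2) ` (ncycles n \<times> ncycles n)"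
proof safe
  fix \<sigma> assume \<sigma>: "\<sigma> \<in> ncycles (2 * n)" and pres: "preserves_halves n (transpose 0 n \<circ> \<sigma>)"
  have "transpose 0 n \<circ> \<sigma> permutes {..<2 * n}"
    using \<sigma> assms by (intro permutes_compose permutes_swap_id) (auto simp: ncycles_def)
  then obtain \<pi>\<^sub>1 \<pi>\<^sub>2 where \<pi>: "\<pi>\<^sub>1 permutes {..<n}" "\<pi>\<^sub>2 permutes {..<n}"
    and join: "transpose 0 n \<circ> \<sigma> = join_perm n \<pi>\<^sub>1 \<pi>\<^sub>2"
    using pres by (rule preserves_halves_imp_join_perm)
  have "\<sigma> = glue_perm n \<pi>\<^sub>1 \<pi>\<^sub>2"
    unfolding glue_perm_def join[symmetric] by (simp add: fun_eq_iff)
  moreover have "\<pi>\<^sub>1 \<in> ncycles n" "\<pi>\<^sub>2 \<in> ncycles n"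
    using \<sigma> is_ncycle_glue_perm_iff[OF assms \<pi>] \<pi> by (auto simp: ncycles_def \<open>\<sigma> = _\<close>)
  ultimately show "\<sigma> \<in> (\<lambda>(\<pi>\<^sub>1, \<pi>\<^sub>2). glue_perm n \<pi>\<^sub>1 \<pi>\<^sub>2) ` (ncycles n \<times> ncycles n)"
    by blast
next
  fix \<pi>\<^sub>1 \<pi>\<^sub>2 assume "\<pi>\<^sub>1 \<in> ncycles n" "\<pi>\<^sub>2 \<in> ncycles n"
  then have \<pi>: "\<pi>\<^sub>1 permutes {..<n}" "\<pi>\<^sub>2 permutes {..<n}" "is_ncycle n \<pi>\<^sub>1" "is_ncycle n \<pi>\<^sub>2"
    by (auto simp: ncycles_def)
  have "glue_perm n \<pi>\<^sub>1 \<pi>\<^sub>2 permutes {..<2 * n}" unfolding glue_perm_def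
    using assms by (intro permutes_compose[OF join_perm_permutes[OF \<pi>(1,2)]] permutes_swap_id) auto
  then show "glue_perm n \<pi>\<^sub>1 \<pi>\<^sub>2 \<in> ncycles (2 * n)"
    using is_ncycle_glue_perm_iff[OF assms \<pi>(1,2)] \<pi> by (simp add: ncycles_def)
  show "preserves_halves n (transpose 0 n \<circ> glue_perm n \<pi>\<^sub>1 \<pi>\<^sub>2)"
    using preserves_halves_join_perm[OF \<pi>(1)] by (simp add: glue_perm_def o_assoc)
qed

lemma prod_lessThan_double:
  fixes n :: nat
  shows "(\<Prod>a<2 * n. f a) = (\<Prod>a<n. f a) * (\<Prod>a<n. f (n + a))"
proof -
  have "{..<2 * n} = {..<n} \<union> (+) n ` {..<n}"
  proof (rule set_eqI)
    show "x \<in> {..<2 * n} \<longleftrightarrow> x \<in> {..<n} \<union> (+) n ` {..<n}" for x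
      by (cases "x < n") (auto simp: image_iff intro!: bexI[of _ "x - n"])
  qed
  moreover have "{..<n} \<inter> (+) n ` {..<n} = {}" by auto
  ultimately show ?thesis by (simp add: prod.union_disjoint prod.reindex)
qed

text \<open>Variable \<open>(a, b)\<close> of \<open>HC (2 * n)\<close> becomes variable \<open>(a mod n, b' mod n)\<close> of \<open>HC n\<close>,
  where \<open>b' = transpose 0 n b\<close>, if \<open>a\<close> and \<open>b'\<close> lie in the same half, and \<open>0\<close> otherwise.\<close>
definition glue_subst :: "nat \<Rightarrow> nat \<Rightarrow> nat + 'a::zero" where
  "glue_subst n i = (let a = i div (2 * n); b = transpose 0 n (i mod (2 * n)) in
     if a < n \<longleftrightarrow> b < n then Inl (a mod n * n + b mod n) else Inr 0)"

definition glue_entry :: "(nat \<Rightarrow> 'a) \<Rightarrow> nat \<Rightarrow> nat \<Rightarrow> nat \<Rightarrow> 'a::zero" where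
  "glue_entry x n a b = (if a < n \<longleftrightarrow> b < n then x (a mod n * n + b mod n) else 0)"

lemma HC_glue_subst_eq_sum:
  "HC (2 * n) (\<lambda>i. case glue_subst n i of Inl j \<Rightarrow> x j | Inr c \<Rightarrow> c)
    = (\<Sum>\<sigma>\<in>ncycles (2 * n). \<Prod>a<2 * n. glue_entry x n a (transpose 0 n (\<sigma> a)))"
  unfolding HC_eq_sum_ncycles
proof (intro sum.cong prod.cong refl)
  fix \<sigma> a assume "\<sigma> \<in> ncycles (2 * n)" "a \<in> {..<2 * n}"
  then have "\<sigma> a < 2 * n" by (simp add: ncycles_def permutes_lessThan_less)
  then show "(case glue_subst n (a * (2 * n) + \<sigma> a) of Inl j \<Rightarrow> x j | Inr c \<Rightarrow> c)
      = glue_entry x n a (transpose 0 n (\<sigma> a))"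
    by (simp add: glue_subst_def glue_entry_def Let_def)
qed

lemma prod_glue_entry_glue_perm:
  assumes "\<pi>\<^sub>1 permutes {..<n}" "\<pi>\<^sub>2 permutes {..<n}"
  shows "(\<Prod>a<2 * n. glue_entry x n a (transpose 0 n (glue_perm n \<pi>\<^sub>1 \<pi>\<^sub>2 a)))
    = (\<Prod>i<n. x (i * n + \<pi>\<^sub>1 i)) * (\<Prod>i<n. x (i * n + \<pi>\<^sub>2 i))"
  unfolding prod_lessThan_double glue_perm_def
  by (intro arg_cong2[where f = "(*)"] prod.cong)
    (auto simp: glue_entry_def join_perm_def permutes_lessThan_less[OF assms(1)]
      permutes_lessThan_less[OF assms(2)])

lemma inj_on_glue_perm: "inj_on (\<lambda>(\<pi>\<^sub>1, \<pi>\<^sub>2). glue_perm n \<pi>\<^sub>1 \<pi>\<^sub>2) (ncycles n \<times> ncycles n)"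
proof (rule inj_onI, clarsimp)
  fix \<pi>\<^sub>1 \<pi>\<^sub>2 \<rho>\<^sub>1 \<rho>\<^sub>2
  assume "\<pi>\<^sub>1 \<in> ncycles n" "\<pi>\<^sub>2 \<in> ncycles n" "\<rho>\<^sub>1 \<in> ncycles n" "\<rho>\<^sub>2 \<in> ncycles n"
    and "glue_perm n \<pi>\<^sub>1 \<pi>\<^sub>2 = glue_perm n \<rho>\<^sub>1 \<rho>\<^sub>2"
  then show "\<pi>\<^sub>1 = \<rho>\<^sub>1 \<and> \<pi>\<^sub>2 = \<rho>\<^sub>2"
    by (intro join_perm_inj[where n = n])
      (auto simp: ncycles_def glue_perm_def fun_eq_iff dest: transpose_eq_imp_eq)
qed

lemma HC_double_glue_subst:
  assumes n: "0 < n"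
  shows "HC (2 * n) (\<lambda>i. case glue_subst n i of Inl j \<Rightarrow> x j | Inr c \<Rightarrow> c) = HC n x * HC n x"
proof -
  define W where "W \<sigma> = (\<Prod>a<2 * n. glue_entry x n a (transpose 0 n (\<sigma> a)))" for \<sigma>
  let ?glue = "\<lambda>(\<pi>\<^sub>1, \<pi>\<^sub>2). glue_perm n \<pi>\<^sub>1 \<pi>\<^sub>2"
  have "HC (2 * n) (\<lambda>i. case glue_subst n i of Inl j \<Rightarrow> x j | Inr c \<Rightarrow> c) = (\<Sum>\<sigma>\<in>ncycles (2 * n). W \<sigma>)"
    unfolding W_def by (rule HC_glue_subst_eq_sum)
  also have "\<dots> = (\<Sum>\<sigma>\<in>?glue ` (ncycles n \<times> ncycles n). W \<sigma>)"
  proof (rule sum.mono_neutral_right[OF finite_ncycles])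
    show "?glue ` (ncycles n \<times> ncycles n) \<subseteq> ncycles (2 * n)"
      using ncycles_preserving_halves[OF n] by blast
    show "\<forall>\<sigma>\<in>ncycles (2 * n) - ?glue ` (ncycles n \<times> ncycles n). W \<sigma> = 0"
    proof
      fix \<sigma> assume "\<sigma> \<in> ncycles (2 * n) - ?glue ` (ncycles n \<times> ncycles n)"
      then have "\<not> preserves_halves n (transpose 0 n \<circ> \<sigma>)"
        using ncycles_preserving_halves[OF n] by blast
      then obtain a where "a < 2 * n" "\<not> (a < n \<longleftrightarrow> transpose 0 n (\<sigma> a) < n)"
        by (auto simp: preserves_halves_def)
      then show "W \<sigma> = 0" unfolding W_def by (intro prod_zero) (auto simp: glue_entry_def)
    qed
  qed
  also have "\<dots> = (\<Sum>(\<pi>\<^sub>1, \<pi>\<^sub>2)\<in>ncycles n \<times> ncycles n. W (glue_perm n \<pi>\<^sub>1 \<pi>\<^sub>2))"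
    using inj_on_glue_perm by (simp add: sum.reindex case_prod_unfold)
  also have "\<dots> = (\<Sum>(\<pi>\<^sub>1, \<pi>\<^sub>2)\<in>ncycles n \<times> ncycles n. (\<Prod>i<n. x (i * n + \<pi>\<^sub>1 i)) * (\<Prod>i<n. x (i * n + \<pi>\<^sub>2 i)))"
    unfolding W_def by (intro sum.cong refl) (auto simp: ncycles_def prod_glue_entry_glue_perm)
  also have "\<dots> = HC n x * HC n x"
    by (simp add: HC_eq_sum_ncycles sum_product sum.cartesian_product)
  finally show ?thesis .
qed

lemma poly_boundedI:
  assumes "t 0 \<le> 1" "\<And>n. 0 < n \<Longrightarrow> t n \<le> C * (n + 1) ^ d"
  shows "poly_bounded t"
  unfolding poly_bounded_def
proof (intro exI allI)
  fix n
  show "t n \<le> (n + 1) ^ (C + d)"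
  proof (cases "n = 0")
    case False
    have "C < 2 ^ C" by (rule less_exp)
    also have "\<dots> \<le> (n + 1) ^ C" using False by (intro power_mono) auto
    finally have C: "C \<le> (n + 1) ^ C" by simp
    have "t n \<le> C * (n + 1) ^ d" using assms(2) False by simp
    also have "\<dots> \<le> (n + 1) ^ C * (n + 1) ^ d" using C by simp
    finally show ?thesis by (simp add: power_add)
  qed (use assms(1) in simp)
qed

lemma is_poly_var: "i < N \<Longrightarrow> 1 \<le> d \<Longrightarrow> is_poly N d (\<lambda>x. x i)"
  unfolding is_poly_def by (intro exI[of _ "PVar i"]) auto

lemma is_poly_const: "is_poly N d (\<lambda>x. c)"
  unfolding is_poly_def by (intro exI[of _ "PConst c"]) auto

lemma is_poly_add: "is_poly N d f \<Longrightarrow> is_poly N d g \<Longrightarrow> is_poly N d (\<lambda>x. f x + g x)"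
  unfolding is_poly_def by (metis max.boundedI Un_least pdeg.simps(3) peval.simps(3) pvars.simps(3))

lemma is_poly_mult:
  "is_poly N d f \<Longrightarrow> is_poly N d' g \<Longrightarrow> is_poly N (d + d') (\<lambda>x. f x * g x)"
  unfolding is_poly_def by (metis add_mono Un_least pdeg.simps(4) peval.simps(4) pvars.simps(4))

lemma is_poly_sum:
  assumes "\<And>a. a \<in> A \<Longrightarrow> is_poly N d (f a)"
  shows "is_poly N d (\<lambda>x. \<Sum>a\<in>A. f a x)"
proof (cases "finite A")
  case True
  then show ?thesis using assms
    by (induction A rule: finite_induct) (auto intro: is_poly_const is_poly_add)
qed (simp add: is_poly_const)

lemma is_poly_prod:
  assumes "finite A" "\<And>a. a \<in> A \<Longrightarrow> is_poly N d (f a)"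
  shows "is_poly N (card A * d) (\<lambda>x. \<Prod>a\<in>A. f a x)"
  using assms
  by (induction A rule: finite_induct) (auto intro: is_poly_const is_poly_mult)

lemma is_poly_HC: "is_poly (n * n) n (HC n)"
proof -
  have "is_poly (n * n) (card {..<n} * 1) (\<lambda>x. \<Sum>\<pi>\<in>ncycles n. \<Prod>i<n. x (i * n + \<pi> i))"
    by (intro is_poly_sum is_poly_prod is_poly_var HC_index_less) auto
  then show ?thesis by (simp add: HC_eq_sum_ncycles[abs_def])
qed

lemma p_family_HCsq: "p_family HCsq"
proof -
  have "is_poly (n * n) (2 * n) (HCsq n)" for n
    using is_poly_mult[OF is_poly_HC is_poly_HC, of n]
    by (simp add: HCsq_def[abs_def] power2_eq_square mult_2)
  moreover have "poly_bounded (\<lambda>n. n * n)" "poly_bounded (\<lambda>n. 2 * n)"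
    by (auto intro!: poly_boundedI[where C = 2 and d = 2] simp: power2_eq_square)
  ultimately show ?thesis unfolding p_family_def by blast
qed

lemma p_reduces_HCsq_HC: "p_reduces HCsq HC"
  unfolding p_reduces_def
proof (intro exI conjI allI)
  show "poly_bounded (\<lambda>n. 2 * n)"
    by (auto intro!: poly_boundedI[where C = 2 and d = 1])
  fix n
  show "proj_le (HCsq n) (HC (2 * n))"
  proof (cases "n = 0")
    case True
    then show ?thesis by (simp add: proj_le_def HCsq_def)
  next
    case False
    then show ?thesis unfolding proj_le_def
      by (intro exI[of _ "glue_subst n"]) (simp add: HC_double_glue_subst HCsq_def power2_eq_square)
  qed
qed

lemma HCsq_in_VNP: "HCsq \<in> VNP"
  by (simp add: VNP_def p_family_HCsq p_reduces_HCsq_HC)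

section \<open>Oracle circuits\<close>

text \<open>A single program with at most \<open>s\<close> gates computes every member of \<open>F\<close> at one of its gates,
  so that intermediate results can be shared.\<close>
definition computable_within :: "'a::comm_ring_1 pfun \<Rightarrow> nat \<Rightarrow> 'a pfun set \<Rightarrow> bool" where
  "computable_within g s F \<longleftrightarrow> (\<exists>prog. wf_prog prog \<and> length prog \<le> s \<and>
     (\<forall>f\<in>F. \<exists>j<length prog. \<forall>x. prog_vals g x prog ! j = f x))"

lemma length_prog_vals [simp]: "length (prog_vals g x prog) = length prog"
  by (induction prog rule: rev_induct) (simp_all add: prog_vals_def)

lemma prog_vals_snoc:
  "prog_vals g x (prog @ [gt]) = prog_vals g x prog @ [gate_val g x (prog_vals g x prog) gt]"
  by (simp add: prog_vals_def)

lemma prog_vals_snoc_nth: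
  "i < length prog \<Longrightarrow> prog_vals g x (prog @ [gt]) ! i = prog_vals g x prog ! i"
  "prog_vals g x (prog @ [gt]) ! length prog = gate_val g x (prog_vals g x prog) gt"
  by (simp_all add: prog_vals_snoc nth_append)

lemma wf_prog_snoc: "wf_prog prog \<Longrightarrow> gate_refs gt \<subseteq> {..<length prog} \<Longrightarrow> wf_prog (prog @ [gt])"
  by (auto simp: wf_prog_def nth_append less_Suc_eq)

lemma computable_within_empty: "computable_within g 0 {}"
  by (auto simp: computable_within_def wf_prog_def intro: exI[of _ "[]"])

lemma computable_within_mono:
  "computable_within g s F \<Longrightarrow> s \<le> s' \<Longrightarrow> F' \<subseteq> F \<Longrightarrow> computable_within g s' F'"
  unfolding computable_within_def by (meson order_trans subset_iff)

lemma computable_within_snoc: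
  assumes "computable_within g s F"
    and gate: "\<And>prog. \<forall>f\<in>F. \<exists>j<length prog. \<forall>x. prog_vals g x prog ! j = f x \<Longrightarrow>
       \<exists>gt. gate_refs gt \<subseteq> {..<length prog} \<and> (\<forall>x. gate_val g x (prog_vals g x prog) gt = f x)"
  shows "computable_within g (Suc s) (insert f F)"
proof -
  obtain prog where prog: "wf_prog prog" "length prog \<le> s"
    and F: "\<forall>f\<in>F. \<exists>j<length prog. \<forall>x. prog_vals g x prog ! j = f x"
    using assms(1) unfolding computable_within_def by blast
  obtain gt where gt: "gate_refs gt \<subseteq> {..<length prog}" "\<forall>x. gate_val g x (prog_vals g x prog) gt = f x"
    using gate[OF F] by blast
  have "\<exists>j<length (prog @ [gt]). \<forall>x. prog_vals g x (prog @ [gt]) ! j = f' x" if "f' \<in> insert f F" for f'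
  proof (cases "f' = f")
    case True
    then show ?thesis using gt(2)
      by (intro exI[of _ "length prog"]) (simp add: prog_vals_snoc_nth)
  next
    case False
    with that have "f' \<in> F" by simp
    then obtain j where "j < length prog" "\<forall>x. prog_vals g x prog ! j = f' x"
      using bspec[OF F] by blast
    then show ?thesis by (intro exI[of _ j]) (simp add: prog_vals_snoc_nth)
  qed
  moreover have "length (prog @ [gt]) \<le> Suc s" using prog(2) by simp
  ultimately show ?thesis
    using wf_prog_snoc[OF prog(1) gt(1)] unfolding computable_within_def by blast
qed

lemma computable_within_var:
  "computable_within g s F \<Longrightarrow> computable_within g (Suc s) (insert (\<lambda>x. x i) F)"
  by (erule computable_within_snoc) (intro exI[of _ "GVar i"], simp)

lemma computable_within_const:
  "computable_within g s F \<Longrightarrow> computable_within g (Suc s) (insert (\<lambda>x. c) F)"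
  by (erule computable_within_snoc) (intro exI[of _ "GConst c"], simp)

lemma computable_within_add:
  assumes "computable_within g s F" "f \<in> F" "h \<in> F"
  shows "computable_within g (Suc s) (insert (\<lambda>x. f x + h x) F)"
proof (rule computable_within_snoc[OF assms(1)])
  fix prog assume F: "\<forall>f\<in>F. \<exists>j<length prog. \<forall>x. prog_vals g x prog ! j = f x"
  obtain i where "i < length prog" "\<forall>x. prog_vals g x prog ! i = f x"
    using F assms(2) by blast
  moreover obtain j where "j < length prog" "\<forall>x. prog_vals g x prog ! j = h x"
    using F assms(3) by blast
  ultimately
  show "\<exists>gt. gate_refs gt \<subseteq> {..<length prog} \<and>
      (\<forall>x. gate_val g x (prog_vals g x prog) gt = f x + h x)"
    by (intro exI[of _ "GAdd i j"]) simp
qed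

lemma computable_within_mult:
  assumes "computable_within g s F" "f \<in> F" "h \<in> F"
  shows "computable_within g (Suc s) (insert (\<lambda>x. f x * h x) F)"
proof (rule computable_within_snoc[OF assms(1)])
  fix prog assume F: "\<forall>f\<in>F. \<exists>j<length prog. \<forall>x. prog_vals g x prog ! j = f x"
  obtain i where "i < length prog" "\<forall>x. prog_vals g x prog ! i = f x"
    using F assms(2) by blast
  moreover obtain j where "j < length prog" "\<forall>x. prog_vals g x prog ! j = h x"
    using F assms(3) by blast
  ultimately
  show "\<exists>gt. gate_refs gt \<subseteq> {..<length prog} \<and>
      (\<forall>x. gate_val g x (prog_vals g x prog) gt = f x * h x)"
    by (intro exI[of _ "GMul i j"]) simp
qed

lemma computable_within_oracle:
  assumes "computable_within g s F" "\<And>k. k < m \<Longrightarrow> h k \<in> F"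
  shows "computable_within g (Suc s) (insert (\<lambda>x. g (\<lambda>k. if k < m then h k x else 0)) F)"
proof (rule computable_within_snoc[OF assms(1)])
  fix prog assume "\<forall>f\<in>F. \<exists>j<length prog. \<forall>x. prog_vals g x prog ! j = f x"
  then have "\<forall>k. \<exists>j. k < m \<longrightarrow> j < length prog \<and> (\<forall>x. prog_vals g x prog ! j = h k x)"
    using assms(2) by blast
  then obtain J where "\<forall>k. k < m \<longrightarrow> J k < length prog \<and> (\<forall>x. prog_vals g x prog ! J k = h k x)"
    by metis
  then show "\<exists>gt. gate_refs gt \<subseteq> {..<length prog} \<and>
      (\<forall>x. gate_val g x (prog_vals g x prog) gt = g (\<lambda>k. if k < m then h k x else 0))"
    by (intro exI[of _ "GOracle (map J [0..<m])"]) (auto intro!: arg_cong[where f = g])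
qed

lemma oracle_cost_le_if_computable_within:
  assumes "computable_within g s F" "f \<in> F"
  shows "oracle_cost_le g f (s + 2)"
proof -
  obtain prog j where prog: "wf_prog prog" "length prog \<le> s" "j < length prog"
    and j: "\<And>x. prog_vals g x prog ! j = f x"
    using assms by (force simp: computable_within_def)
  define prog' where "prog' = (prog @ [GConst 0]) @ [GAdd j (length prog)]"
  have "wf_prog prog'"
    unfolding prog'_def using prog by (intro wf_prog_snoc) auto
  moreover have "last (prog_vals g x prog') = f x" for x
  proof -
    have "last (prog_vals g x prog')
        = gate_val g x (prog_vals g x (prog @ [GConst 0])) (GAdd j (length prog))"
      unfolding prog'_def prog_vals_snoc[of _ _ "prog @ [GConst 0]"] by simp
    also have "\<dots> = f x" using prog(3) by (simp add: prog_vals_snoc_nth j)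
    finally show ?thesis .
  qed
  ultimately show ?thesis
    using prog(2) by (auto simp: oracle_cost_le_def prog'_def)
qed

lemma computable_within_iterate:
  assumes "computable_within g s F"
    and step: "\<And>k s'. k < m \<Longrightarrow> computable_within g s' (F \<union> h ` {..<k}) \<Longrightarrow>
       computable_within g (s' + c) (insert (h k) (F \<union> h ` {..<k}))"
  shows "computable_within g (s + m * c) (F \<union> h ` {..<m})"
  using step
proof (induction m)
  case 0
  then show ?case using assms(1) by simp
next
  case (Suc m)
  then have "computable_within g (s + m * c + c) (insert (h m) (F \<union> h ` {..<m}))"
    by simp
  then show ?case by (simp add: lessThan_Suc algebra_simps)
qed

lemma computable_within_sum_prod:
  assumes "computable_within g s F" "finite A" "\<And>i. i \<in> A \<Longrightarrow> f i \<in> F" "\<And>i. i \<in> A \<Longrightarrow> h i \<in> F"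
  shows "computable_within g (s + 2 * card A + 1) (insert (\<lambda>x. \<Sum>i\<in>A. f i x * h i x) F)"
  using assms(2-4)
proof (induction A rule: finite_induct)
  case empty
  then show ?case using computable_within_const[OF assms(1), of 0] by simp
next
  case (insert a A)
  let ?S = "\<lambda>x. \<Sum>i\<in>A. f i x * h i x"
  have "computable_within g (s + 2 * card A + 1) (insert ?S F)"
    using insert by blast
  then have "computable_within g (Suc (s + 2 * card A + 1)) (insert (\<lambda>x. f a x * h a x) (insert ?S F))"
    by (rule computable_within_mult) (use insert.prems in auto)
  then have "computable_within g (Suc (Suc (s + 2 * card A + 1)))
      (insert (\<lambda>x. f a x * h a x + ?S x) (insert (\<lambda>x. f a x * h a x) (insert ?S F)))"
    by (rule computable_within_add) auto
  then show ?case
    using insert.hyps by (elim computable_within_mono) auto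
qed

lemma computable_within_linear_combination:
  assumes "computable_within g s F" "f \<in> F" "h \<in> F"
  shows "computable_within g (s + 5) (insert (\<lambda>x. a * f x + b * h x) F)"
proof -
  let ?A = "\<lambda>x. a" and ?B = "\<lambda>x. b" and ?Af = "\<lambda>x. a * f x" and ?Bh = "\<lambda>x. b * h x"
  have "computable_within g (Suc s) (insert ?A F)"
    by (rule computable_within_const) fact
  then have "computable_within g (Suc (Suc s)) (insert ?Af (insert ?A F))"
    by (rule computable_within_mult) (use assms in auto)
  then have "computable_within g (Suc (Suc (Suc s))) (insert ?B (insert ?Af (insert ?A F)))"
    by (rule computable_within_const)
  then have "computable_within g (Suc (Suc (Suc (Suc s)))) (insert ?Bh (insert ?B (insert ?Af (insert ?A F))))"
    by (rule computable_within_mult) (use assms in auto)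
  then have "computable_within g (Suc (Suc (Suc (Suc (Suc s)))))
      (insert (\<lambda>x. a * f x + b * h x) (insert ?Bh (insert ?B (insert ?Af (insert ?A F)))))"
    by (rule computable_within_add) auto
  then show ?thesis by (rule computable_within_mono) auto
qed

lemma computable_within_affine:
  assumes "computable_within g s F"
  shows "computable_within g (s + 7) (insert (\<lambda>x. c * x i + d) F)"
proof -
  have "computable_within g (Suc (Suc s)) (insert (\<lambda>x. 1) (insert (\<lambda>x. x i) F))"
    by (intro computable_within_const computable_within_var assms)
  then have "computable_within g (Suc (Suc s) + 5)
      (insert (\<lambda>x. c * x i + d * 1) (insert (\<lambda>x. 1) (insert (\<lambda>x. x i) F)))"
    by (rule computable_within_linear_combination) auto
  then show ?thesis by (elim computable_within_mono) auto
qed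

section \<open>Computing \<open>HC\<close> with an oracle for \<open>HC\<^sup>2\<close>\<close>

definition HC_pencil :: "nat \<Rightarrow> (nat \<Rightarrow> 'a) \<Rightarrow> (nat \<Rightarrow> 'a) \<Rightarrow> 'a::comm_ring_1 poly" where
  "HC_pencil n u x = (\<Sum>\<pi>\<in>ncycles n. \<Prod>i<n. [:u (i * n + \<pi> i), x (i * n + \<pi> i):])"

lemma poly_HC_pencil: "poly (HC_pencil n u x) t = HC n (\<lambda>k. t * x k + u k)"
  by (simp add: HC_pencil_def HC_eq_sum_ncycles poly_sum poly_prod add.commute)

lemma degree_prod_linear: "degree (\<Prod>i<n. [:a i, b i:]) \<le> n"
proof (induction n)
  case (Suc n)
  have "degree (\<Prod>i<Suc n. [:a i, b i:]) \<le> degree (\<Prod>i<n. [:a i, b i:]) + degree [:a n, b n:]"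
    unfolding prod.lessThan_Suc by (rule degree_mult_le)
  also have "\<dots> \<le> Suc n" using Suc by simp
  finally show ?case .
qed simp

lemma coeff_prod_linear_top: "coeff (\<Prod>i<n. [:a i, b i:]) n = (\<Prod>i<n. b i)"
proof (induction n)
  case (Suc n)
  let ?p = "\<Prod>i<n. [:a i, b i:]"
  have "coeff ?p (Suc n) = 0" using degree_prod_linear[of a b n] by (simp add: coeff_eq_0)
  moreover have "(\<Prod>i<Suc n. [:a i, b i:]) = smult (a n) ?p + pCons 0 (smult (b n) ?p)"
    by (simp add: algebra_simps)
  ultimately show ?case using Suc by (simp add: mult.commute)
qed simp

lemma degree_HC_pencil: "degree (HC_pencil n u x) \<le> n"
  unfolding HC_pencil_def by (rule degree_sum_le) (auto simp: finite_ncycles degree_prod_linear)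

lemma coeff_HC_pencil_top: "coeff (HC_pencil n u x) n = HC n x"
  by (simp add: HC_pencil_def coeff_sum coeff_prod_linear_top HC_eq_sum_ncycles)

lemma coeff_HC_pencil_0: "coeff (HC_pencil n u x) 0 = HC n u"
  by (simp flip: poly_0_coeff_0 add: poly_HC_pencil)

text \<open>Entry \<open>(i, j)\<close>, stored at index \<open>i * n + j\<close>, is \<open>1\<close> iff \<open>j = i + 1 mod n\<close>.\<close>
definition cycle_matrix :: "nat \<Rightarrow> nat \<Rightarrow> 'a::comm_ring_1" where
  "cycle_matrix n k = (if k mod n = Suc (k div n) mod n then 1 else 0)"

definition rotation :: "nat \<Rightarrow> nat \<Rightarrow> nat" where
  "rotation n i = (if i < n then Suc i mod n else i)"

lemma rotation_permutes: "rotation n permutes {..<n}"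
proof (rule inj_imp_permutes)
  show "inj_on (rotation n) {..<n}"
  proof (rule inj_onI)
    fix i j assume "i \<in> {..<n}" "j \<in> {..<n}" "rotation n i = rotation n j"
    then show "i = j"
      by (simp add: rotation_def) (metis Suc_lessI mod_less mod_self nat.inject nat.simps(3))
  qed
qed (auto simp: rotation_def)

lemma funpow_rotation: "i < n \<Longrightarrow> (rotation n ^^ k) i = (i + k) mod n"
  by (induction k) (auto simp: rotation_def mod_Suc_eq)

lemma rotation_in_ncycles: "rotation n \<in> ncycles n"
proof -
  have "(rotation n ^^ (j + n - i)) i = j" if "i < n" "j < n" for i j
    using that by (simp add: funpow_rotation)
  then show ?thesis
    using rotation_permutes by (auto simp: ncycles_def is_ncycle_def)
qed

lemma HC_cycle_matrix: "HC n (cycle_matrix n) = 1"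
proof -
  have weight: "(\<Prod>i<n. cycle_matrix n (i * n + \<pi> i)) = (if \<pi> = rotation n then 1 else 0)"
    if "\<pi> \<in> ncycles n" for \<pi>
  proof -
    have \<pi>: "\<pi> permutes {..<n}" using that by (simp add: ncycles_def)
    have entry: "cycle_matrix n (i * n + \<pi> i) = (if \<pi> i = rotation n i then 1 else 0)"
      if "i < n" for i
      using that permutes_lessThan_less[OF \<pi> that] by (simp add: cycle_matrix_def rotation_def)
    have rot: "\<pi> = rotation n \<longleftrightarrow> (\<forall>i<n. \<pi> i = rotation n i)"
      using permutes_not_in[OF \<pi>] by (auto simp: fun_eq_iff rotation_def)
    show ?thesis
    proof (cases "\<pi> = rotation n")
      case True
      have "(\<Prod>i<n. cycle_matrix n (i * n + \<pi> i)) = 1"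
        by (rule prod.neutral) (simp add: entry, simp add: True)
      then show ?thesis using True by simp
    next
      case False
      then obtain i where "i < n" "\<pi> i \<noteq> rotation n i" using rot by blast
      then have "(\<Prod>i<n. cycle_matrix n (i * n + \<pi> i)) = 0"
        by (intro prod_zero bexI[of _ i]) (auto simp: entry)
      then show ?thesis using False by simp
    qed
  qed
  have "HC n (cycle_matrix n) = (\<Sum>\<pi>\<in>ncycles n. if \<pi> = rotation n then 1 else 0)"
    unfolding HC_eq_sum_ncycles by (rule sum.cong) (simp_all add: weight)
  also have "\<dots> = 1" using rotation_in_ncycles finite_ncycles by simp
  finally show ?thesis .
qed

definition lagrange_basis :: "nat \<Rightarrow> nat \<Rightarrow> 'a::field_char_0 poly" where
  "lagrange_basis D i = smult (inverse (\<Prod>j\<in>{..D} - {i}. of_nat i - of_nat j))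
     (\<Prod>j\<in>{..D} - {i}. [:- of_nat j, 1:])"

lemma degree_lagrange_basis: "i \<le> D \<Longrightarrow> degree (lagrange_basis D i) \<le> D"
proof -
  assume "i \<le> D"
  have "degree (\<Prod>j\<in>{..D} - {i}. [:- of_nat j, 1::'a:])
      \<le> sum (degree \<circ> (\<lambda>j. [:- of_nat j, 1::'a:])) ({..D} - {i})"
    by (rule degree_prod_sum_le) simp
  also have "\<dots> = D" using \<open>i \<le> D\<close> by simp
  finally show ?thesis
    unfolding lagrange_basis_def using degree_smult_le order_trans by blast
qed

lemma poly_lagrange_basis:
  "i \<le> D \<Longrightarrow> m \<le> D \<Longrightarrow> poly (lagrange_basis D i) (of_nat m :: 'a::field_char_0) = (if m = i then 1 else 0)"
  by (auto simp: lagrange_basis_def poly_prod)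

lemma coeff_eq_interpolation:
  fixes q :: "'a::field_char_0 poly"
  assumes "degree q \<le> D"
  shows "coeff q k = (\<Sum>i\<le>D. coeff (lagrange_basis D i) k * poly q (of_nat i))"
proof -
  define r where "r = (\<Sum>i\<le>D. smult (poly q (of_nat i)) (lagrange_basis D i))"
  have card: "card (of_nat ` {..D} :: 'a set) = Suc D"
    by (subst card_image) (auto simp: inj_on_def)
  have "q = r"
  proof (rule poly_eqI_degree[where A = "of_nat ` {..D}"])
    fix y assume "y \<in> (of_nat ` {..D} :: 'a set)"
    then obtain m where m: "m \<le> D" "y = of_nat m" by auto
    have "poly r y = (\<Sum>i\<le>D. if i = m then poly q (of_nat i) else 0)"
      unfolding r_def poly_sum using m by (intro sum.cong) (auto simp: poly_lagrange_basis)
    then show "poly q y = poly r y" using m by simp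
  next
    have "degree r \<le> D" unfolding r_def
      by (intro degree_sum_le) (auto intro: order_trans[OF degree_smult_le] degree_lagrange_basis)
    then show "degree r < card (of_nat ` {..D} :: 'a set)" using card by simp
  qed (use assms card in simp)
  then have "coeff q k = coeff r k" by (rule arg_cong)
  also have "\<dots> = (\<Sum>i\<le>D. coeff (lagrange_basis D i) k * poly q (of_nat i))"
    unfolding r_def coeff_sum coeff_smult by (simp add: mult.commute)
  finally show ?thesis .
qed

lemma coeff_eq_square_root_step:
  fixes p :: "'a::field_char_0 poly"
  assumes "coeff p 0 = 1" "0 < k"
  shows "coeff p k = (coeff (p ^ 2) k - (\<Sum>i\<in>{1..<k}. coeff p i * coeff p (k - i))) / 2"
proof -
  have "{..k} = insert 0 (insert k {1..<k})" using assms(2) by auto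
  then have "coeff (p ^ 2) k = 2 * coeff p k + (\<Sum>i\<in>{1..<k}. coeff p i * coeff p (k - i))"
    using assms by (simp add: power2_eq_square coeff_mult)
  then show ?thesis by (simp add: field_simps)
qed

lemma computable_pencil_square_values:
  fixes u :: "nat \<Rightarrow> 'a::comm_ring_1"
  assumes "computable_within (HCsq n) s F"
  shows "computable_within (HCsq n) (s + m * (7 * (n * n) + 1))
    (F \<union> (\<lambda>a x. poly (HC_pencil n u x ^ 2) (of_nat a)) ` {..<m})"
proof (rule computable_within_iterate[OF assms])
  fix a s'
  assume hyp: "computable_within (HCsq n) s' (F \<union> (\<lambda>a x. poly (HC_pencil n u x ^ 2) (of_nat a)) ` {..<a})"
    (is "computable_within _ _ ?F")
  define arg where "arg k = (\<lambda>x. of_nat a * x k + u k)" for k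
  have "computable_within (HCsq n) (s' + n * n * 7) (?F \<union> arg ` {..<n * n})"
    by (rule computable_within_iterate[OF hyp]) (simp add: arg_def computable_within_affine)
  then have "computable_within (HCsq n) (Suc (s' + n * n * 7))
      (insert (\<lambda>x. HCsq n (\<lambda>k. if k < n * n then arg k x else 0)) (?F \<union> arg ` {..<n * n}))"
    by (rule computable_within_oracle) auto
  moreover have "HCsq n (\<lambda>k. if k < n * n then arg k x else 0) = poly (HC_pencil n u x ^ 2) (of_nat a)" for x
    by (simp add: HCsq_def poly_HC_pencil arg_def cong: HC_cong)
  ultimately show "computable_within (HCsq n) (s' + (7 * (n * n) + 1))
      (insert (\<lambda>x. poly (HC_pencil n u x ^ 2) (of_nat a)) ?F)"
    by (elim computable_within_mono) auto
qed

lemma computable_coeffs_from_values: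
  fixes p :: "(nat \<Rightarrow> 'a::field_char_0) \<Rightarrow> 'a poly"
  assumes "computable_within g s F" "\<And>x. degree (p x) \<le> D"
    and at_points: "\<And>i. i \<le> D \<Longrightarrow> (\<lambda>x. poly (p x) (of_nat i)) \<in> F"
  shows "computable_within g (s + m * (3 * D + 4)) (F \<union> (\<lambda>k x. coeff (p x) k) ` {..<m})"
proof (rule computable_within_iterate[OF assms(1)])
  fix k s' assume hyp: "computable_within g s' (F \<union> (\<lambda>k x. coeff (p x) k) ` {..<k})"
    (is "computable_within _ _ ?F")
  define w where "w i = (\<lambda>x :: nat \<Rightarrow> 'a. coeff (lagrange_basis D i :: 'a poly) k)" for i
  have "computable_within g (s' + Suc D * 1) (?F \<union> w ` {..<Suc D})"
    by (rule computable_within_iterate[OF hyp]) (simp add: w_def computable_within_const)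
  then have "computable_within g (s' + Suc D * 1 + 2 * card {..<Suc D} + 1)
      (insert (\<lambda>x. \<Sum>i\<in>{..<Suc D}. w i x * poly (p x) (of_nat i)) (?F \<union> w ` {..<Suc D}))"
    by (rule computable_within_sum_prod) (auto intro: at_points)
  moreover have "(\<Sum>i\<in>{..<Suc D}. w i x * poly (p x) (of_nat i)) = coeff (p x) k" for x
    using coeff_eq_interpolation[OF assms(2)] by (simp add: w_def lessThan_Suc_atMost mult.commute)
  ultimately show "computable_within g (s' + (3 * D + 4)) (insert (\<lambda>x. coeff (p x) k) ?F)"
    by (elim computable_within_mono) auto
qed

lemma computable_coeffs_from_square:
  fixes p :: "(nat \<Rightarrow> 'a::field_char_0) \<Rightarrow> 'a poly"
  assumes "computable_within g s F" "\<And>x. coeff (p x) 0 = 1"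
    and squares: "\<And>k. k < m \<Longrightarrow> (\<lambda>x. coeff (p x ^ 2) k) \<in> F"
  shows "computable_within g (s + m * (2 * m + 5)) (F \<union> (\<lambda>k x. coeff (p x) k) ` {..<m})"
proof (rule computable_within_iterate[OF assms(1)])
  fix k s' assume k: "k < m" and hyp: "computable_within g s' (F \<union> (\<lambda>k x. coeff (p x) k) ` {..<k})"
    (is "computable_within _ _ ?F")
  let ?c = "\<lambda>i x. coeff (p x) i" and ?sq = "\<lambda>x. coeff (p x ^ 2) k"
  show "computable_within g (s' + (2 * m + 5)) (insert (?c k) ?F)"
  proof (cases "k = 0")
    case True
    have "computable_within g (Suc s') (insert (\<lambda>x. 1) ?F)"
      by (rule computable_within_const) fact
    then show ?thesis using True assms(2) by (elim computable_within_mono) auto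
  next
    case False
    let ?conv = "\<lambda>x. \<Sum>i\<in>{1..<k}. ?c i x * ?c (k - i) x"
    have "computable_within g (s' + 2 * card {1..<k} + 1) (insert ?conv ?F)"
      by (rule computable_within_sum_prod[OF hyp]) (use False in auto)
    then have "computable_within g (s' + 2 * card {1..<k} + 1 + 5)
        (insert (\<lambda>x. inverse 2 * ?sq x + - inverse 2 * ?conv x) (insert ?conv ?F))"
      by (rule computable_within_linear_combination) (use squares[OF k] in auto)
    moreover have "inverse 2 * ?sq x + - inverse 2 * ?conv x = ?c k x" for x
      using coeff_eq_square_root_step[OF assms(2), of k] False by (simp add: field_simps)
    ultimately show ?thesis using k by (elim computable_within_mono) auto
  qed
qed

definition HC_circuit_size :: "nat \<Rightarrow> nat" where
  "HC_circuit_size n = (2 * n + 1) * (7 * (n * n) + 1) + (n + 1) * (3 * (2 * n) + 4)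
     + (n + 1) * (2 * (n + 1) + 5) + 2"

lemma HC_circuit_size_le: "0 < n \<Longrightarrow> HC_circuit_size n \<le> 30 * (n + 1) ^ 3"
  by (simp add: HC_circuit_size_def algebra_simps power3_eq_cube)

lemma oracle_cost_le_HC_HCsq:
  "oracle_cost_le (HCsq n) (HC n :: 'a::field_char_0 pfun) (HC_circuit_size n)"
proof -
  let ?P = "\<lambda>x. HC_pencil n (cycle_matrix n) x :: 'a poly"
  have "computable_within (HCsq n) (0 + (2 * n + 1) * (7 * (n * n) + 1))
      ({} \<union> (\<lambda>a x. poly (?P x ^ 2) (of_nat a)) ` {..<2 * n + 1})"
    by (rule computable_pencil_square_values[OF computable_within_empty])
  then have "computable_within (HCsq n) (0 + (2 * n + 1) * (7 * (n * n) + 1) + (n + 1) * (3 * (2 * n) + 4))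
      ({} \<union> (\<lambda>a x. poly (?P x ^ 2) (of_nat a)) ` {..<2 * n + 1} \<union> (\<lambda>k x. coeff (?P x ^ 2) k) ` {..<n + 1})"
  proof (rule computable_coeffs_from_values)
    show "degree (?P x ^ 2) \<le> 2 * n" for x
      using degree_power_le[of "?P x" 2] degree_HC_pencil[of n "cycle_matrix n" x] by simp
  qed auto
  then have circuit: "computable_within (HCsq n) (0 + (2 * n + 1) * (7 * (n * n) + 1)
      + (n + 1) * (3 * (2 * n) + 4) + (n + 1) * (2 * (n + 1) + 5))
      (\<dots> \<union> (\<lambda>k x. coeff (?P x) k) ` {..<n + 1})"
    by (rule computable_coeffs_from_square) (auto simp: coeff_HC_pencil_0 HC_cycle_matrix)
  have "HC n \<in> (\<lambda>k x. coeff (?P x) k) ` {..<n + 1}"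
    by (rule image_eqI[where x = n]) (simp_all add: coeff_HC_pencil_top fun_eq_iff)
  with oracle_cost_le_if_computable_within[OF circuit] show ?thesis
    by (simp add: HC_circuit_size_def)
qed

lemma c_reduces_HC_HCsq: "c_reduces (HC :: nat \<Rightarrow> 'a::field_char_0 pfun) HCsq"
  unfolding c_reduces_def
proof (intro exI conjI allI)
  \<comment> \<open>\<open>poly_bounded\<close> forces size \<open>1\<close> at \<open>n = 0\<close>, where \<open>HC 0 = 1\<close> is a single constant gate.\<close>
  define size where "size n = (if n = 0 then 1 else HC_circuit_size n)" for n
  show "poly_bounded (\<lambda>n. n)"
    by (auto intro!: poly_boundedI[where C = 1 and d = 1])
  show "poly_bounded size"
    by (rule poly_boundedI[where C = 30 and d = 3]) (use HC_circuit_size_le in \<open>simp_all add: size_def\<close>)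
  fix n
  show "oracle_cost_le (HCsq n) (HC n :: 'a pfun) (size n)"
  proof (cases "n = 0")
    case True
    have "wf_prog [GConst (1::'a)]" by (simp add: wf_prog_def)
    then show ?thesis
      using True by (auto simp: oracle_cost_le_def size_def prog_vals_def intro!: exI[of _ "[GConst 1]"])
  qed (simp add: size_def oracle_cost_le_HC_HCsq)
qed

theorem HCsq_in_VNPC_c: "(HCsq :: nat \<Rightarrow> 'a::field_char_0 pfun) \<in> VNPC_c"
  by (simp add: VNPC_c_def HCsq_in_VNP c_reduces_HC_HCsq)

theorem corollary1:
  shows "(HCsq :: nat \<Rightarrow> rat pfun) \<in> VNPC_c \<and>
         (HCsq :: nat \<Rightarrow> real pfun) \<in> VNPC_c \<and>
         (HCsq :: nat \<Rightarrow> complex pfun) \<in> VNPC_c"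
  by (intro conjI HCsq_in_VNPC_c)

end
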